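(* Let $\lambda>0$, $\xi>0$, $v_2<v_1$ with either $v_2<0<v_1$ or $0<v_2<v_1$, $q\in[0,1]$, and let $\tilde p(x,t)$ be the (generalized) density of the position $\tilde X(t)$ of the extended telegraph process driven by GCPs with parameter $\lambda$ with Poissonian resets to the origin at rate $\xi$, with $\tilde X(0)=0$ and random initial velocity $V_0$, $P\{V_0=v_1\}=q=1-P\{V_0=v_2\}$. Then for $x\in\mathbb R$, $$ \lim_{t\to+\infty}\tilde p(x,t)=q\overline H_1(x)+(1-q)\overline H_2(x)+\frac{\xi e^{\xi/\lambda}}{v_1-v_2}\Gamma\Big[0,\Big(M_x+\frac1\lambda\Big)\xi\Big]\quad\text{if } v_2<0<v_1, $$ $$ \lim_{t\to+\infty}\tilde p(x,t)=q\overline H_1(x)+(1-q)\overline H_2(x)+\mathbb 1_{\{x>0\}}\frac{\xi e^{\xi/\lambda}}{v_1-v_2}\Gamma\Big[0,\Big(\frac x{v_1}+\frac1\lambda\Big)\xi,\Big(\frac x{v_2}+\frac1\lambda\Big)\xi\Big]\quad\text{if } 0<v_2<v_1, $$ where $\overline H_j(x)=\mathrm{sgn}(v_j)\mathbb 1_{\{x/v_j>0\}}\frac{\xi e^{-\xi x/v_j}}{v_j+\lambda x}$, $j=1,2$.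
   Context: GCP with intensity $\lambda>0$: a Poisson process whose rate is random, exponentially distributed with mean $\lambda$; increments satisfy $P\{\tilde N_\lambda(t+s)-\tilde N_\lambda(t)=k\}=\frac{1}{1+\lambda s}(\frac{\lambda s}{1+\lambda s})^k$. The process: a particle starts at the origin with initial velocity $V(0)$ ($v_1,v_2\neq0$, $v_2<v_1$), moves with velocity alternating between $v_1$ and $v_2$, the periods at velocity $v_1$ and at $v_2$ being governed by two independent GCPs of intensity $\lambda$; additionally it is instantaneously reset to the origin at the epochs of an independent Poisson process of rate $\xi$, restarting afresh with its initial velocity. Conditional on $V(0)=v_j$, the density is $\tilde p(x,t|v_j)=e^{-\xi t}p(x,t|v_j)+\xi\int_0^te^{-\xi s}p(x,s|v_j)ds$, where $p(x,t|v_j)=\frac{\delta(x-v_jt)}{1+\lambda t}+\mathbb 1_{\{v_2t<x<v_1t\}}\frac{\lambda}{(v_1-v_2)(1+\lambda t)}$ ($\delta$ Dirac delta); $\tilde p(x,t)=q\tilde p(x,t|v_1)+(1-q)\tilde p(x,t|v_2)$. Notation: $M_x=\max\{x/v_1,x/v_2\}$; $\Gamma(a,z)=\int_z^\infty s^{a-1}e^{-s}ds$; $\Gamma(a,z_0,z_1)=\int_{z_0}^{z_1}s^{a-1}e^{-s}ds$. *)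

theory Defs
  imports "HOL-Analysis.Analysis"
begin

text \<open>Dirac delta evaluated pointwise (as an extended real): infinite mass density at 0,
  zero elsewhere.\<close>
definition dirac_val :: "real \<Rightarrow> ereal" where
  "dirac_val y = (if y = 0 then \<infinity> else 0)"

text \<open>Sifting property: the integral over s in [0,t] of g(s) times delta(x - v s), for v nonzero,
  equals g(x/v)/|v| when 0 < x/v < t (and 0 otherwise).\<close>
definition dirac_int :: "(real \<Rightarrow> real) \<Rightarrow> real \<Rightarrow> real \<Rightarrow> real \<Rightarrow> real" where
  "dirac_int g v x t = (if 0 < x / v \<and> x / v < t then g (x / v) / \<bar>v\<bar> else 0)"

text \<open>Absolutely continuous part of the GCP-driven telegraph density p(x,t|v_j).\<close>
definition p_reg :: "real \<Rightarrow> real \<Rightarrow> real \<Rightarrow> real \<Rightarrow> real \<Rightarrow> real" where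
  "p_reg lam v1 v2 x t =
     (if v2 * t < x \<and> x < v1 * t then lam / ((v1 - v2) * (1 + lam * t)) else 0)"

text \<open>Density of the process with resets, conditional on V(0) = v (v = v1 or v2):
  e^{-xi t} p(x,t|v) + xi * int_0^t e^{-xi s} p(x,s|v) ds,
  where p(x,t|v) = delta(x - v t)/(1 + lam t) + p_reg.\<close>
definition tp_cond :: "real \<Rightarrow> real \<Rightarrow> real \<Rightarrow> real \<Rightarrow> real \<Rightarrow> real \<Rightarrow> real \<Rightarrow> ereal" where
  "tp_cond lam xi v1 v2 v x t =
     ereal (exp (- xi * t) / (1 + lam * t)) * dirac_val (x - v * t)
     + ereal (exp (- xi * t) * p_reg lam v1 v2 x t
       + xi * dirac_int (\<lambda>s. exp (- xi * s) / (1 + lam * s)) v x t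
       + xi * interval_lebesgue_integral lborel (ereal 0) (ereal t)
                (\<lambda>s. exp (- xi * s) * p_reg lam v1 v2 x s))"

definition tp :: "real \<Rightarrow> real \<Rightarrow> real \<Rightarrow> real \<Rightarrow> real \<Rightarrow> real \<Rightarrow> real \<Rightarrow> ereal" where
  "tp lam xi v1 v2 q x t =
     ereal q * tp_cond lam xi v1 v2 v1 x t + ereal (1 - q) * tp_cond lam xi v1 v2 v2 x t"

definition upper_inc_gamma :: "real \<Rightarrow> real \<Rightarrow> real" where
  "upper_inc_gamma a z = interval_lebesgue_integral lborel (ereal z) PInfty
      (\<lambda>s. s powr (a - 1) * exp (- s))"

definition gen_inc_gamma :: "real \<Rightarrow> real \<Rightarrow> real \<Rightarrow> real" where
  "gen_inc_gamma a z0 z1 = interval_lebesgue_integral lborel (ereal z0) (ereal z1)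
      (\<lambda>s. s powr (a - 1) * exp (- s))"

definition Hbar :: "real \<Rightarrow> real \<Rightarrow> real \<Rightarrow> real \<Rightarrow> real" where
  "Hbar lam xi v x = sgn v * (if x / v > 0 then 1 else 0) * (xi * exp (- xi * x / v) / (v + lam * x))"

definition Mx :: "real \<Rightarrow> real \<Rightarrow> real \<Rightarrow> real" where
  "Mx v1 v2 x = max (x / v1) (x / v2)"

end

theory Submission
  imports Defs "HOL-Probability.Sinc_Integral" "HOL-Real_Asymp.Real_Asymp"
begin

text \<open>For large t both Dirac masses have passed x, the Dirac part of the reset term has
  reached its final value Hbar_j(x), and e^{-xi t} kills the bounded regular part; what remains
  is xi times the integral of e^{-xi s} p_reg(x,s) over [0,t]. For s > 0 the regular density
  equals lam/((v1-v2)(1+lam s)) on an interval of times (a,b) and vanishes elsewhere, and the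
  substitution u = (s + 1/lam) xi turns its integral into an incomplete gamma integral of
  order 0. For velocities of opposite signs that interval is (M_x, infinity), giving
  Gamma(0, .) in the limit; for positive velocities it is (x/v1, x/v2), empty unless x > 0.\<close>

lemma interval_integral_restrict:
  fixes f g :: "real \<Rightarrow> real" and a b c d :: real
  assumes "c \<le> a" "a \<le> b" "b \<le> d"
    and "\<And>s. c < s \<Longrightarrow> s < d \<Longrightarrow> f s = (if a < s \<and> s < b then g s else 0)"
  shows "(LBINT s=ereal c..ereal d. f s) = (LBINT s=ereal a..ereal b. g s)"
proof -
  have "indicator {c<..<d} s *\<^sub>R f s = indicator {a<..<b} s *\<^sub>R g s" for s
    using assms by (auto split: split_indicator)
  then show ?thesis
    using assms unfolding interval_lebesgue_integral_def set_lebesgue_integral_def by simp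
qed

lemma interval_integral_tendsto_to_infinity:
  fixes f :: "real \<Rightarrow> real" and a :: real
  assumes "set_integrable lborel {a..} f"
  shows "((\<lambda>b. LBINT x=ereal a..ereal b. f x) \<longlongrightarrow> (LBINT x=ereal a..\<infinity>. f x)) at_top"
proof -
  have "((\<lambda>b. LBINT x:{a..b}. f x) \<longlongrightarrow> (LBINT x:{a..}. f x)) at_top"
    using assms by (intro tendsto_set_lebesgue_integral_at_top) auto
  moreover have "(LBINT x:{a..}. f x) = (LBINT x=ereal a..\<infinity>. f x)"
    unfolding interval_integral_to_infinity_eq
    by (rule set_integral_discrete_difference[where X="{a}"]) auto
  moreover have "\<forall>\<^sub>F b in at_top. (LBINT x:{a..b}. f x) = (LBINT x=ereal a..ereal b. f x)"
    using eventually_ge_at_top[of a] by eventually_elim (simp add: interval_integral_Icc)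
  ultimately show ?thesis
    using tendsto_cong by fastforce
qed

lemma set_integrable_incomplete_gamma:
  fixes a z :: real
  assumes "0 < z" "a \<le> 1"
  shows "set_integrable lborel {z..} (\<lambda>s. s powr (a - 1) * exp (- s))"
proof (rule set_integrable_bound)
  show "set_integrable lborel {z..} (\<lambda>s. z powr (a - 1) * exp (- (s * 1)))"
    using assms by (intro set_integrable_mult_right
        set_integrable_subset[OF integrable_I0i_exp_mscale[of 1]]) auto
  show "set_borel_measurable lborel {z..} (\<lambda>s. s powr (a - 1) * exp (- s))"
    unfolding set_borel_measurable_def by measurable
  show "AE s in lborel. s \<in> {z..} \<longrightarrow>
      norm (s powr (a - 1) * exp (- s)) \<le> norm (z powr (a - 1) * exp (- (s * 1)))"
    using assms by (intro AE_I2) (auto intro!: mult_right_mono powr_mono2')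
qed

lemma gen_inc_gamma_tendsto_upper_inc_gamma:
  fixes a z :: real
  assumes "0 < z" "a \<le> 1"
  shows "((\<lambda>z1. gen_inc_gamma a z z1) \<longlongrightarrow> upper_inc_gamma a z) at_top"
  unfolding gen_inc_gamma_def upper_inc_gamma_def PInfty_eq_infinity
  using assms by (intro interval_integral_tendsto_to_infinity set_integrable_incomplete_gamma)

lemma integral_exp_div_affine_eq_gen_inc_gamma:
  fixes lam xi a b :: real
  assumes lam: "0 < lam" and xi: "0 < xi" and ab: "- 1 / lam < a" "a \<le> b"
  shows "(LBINT s=ereal a..ereal b. exp (- xi * s) / (1 + lam * s))
       = exp (xi / lam) / lam * gen_inc_gamma 0 ((a + 1 / lam) * xi) ((b + 1 / lam) * xi)"
proof -
  let ?g = "\<lambda>s. (s + 1 / lam) * xi"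
  let ?f = "\<lambda>u::real. u powr (0 - 1) * exp (- u)"
  have g_pos: "0 < ?g s" if "a \<le> s" for s
    using that ab(1) xi by (intro mult_pos_pos) auto
  have integrand: "exp (- xi * s) / (1 + lam * s) = exp (xi / lam) / lam * (xi *\<^sub>R ?f (?g s))"
    if "a \<le> s" for s
  proof -
    have "- 1 < lam * a"
      using ab(1) lam by (simp add: field_simps)
    moreover have "lam * a \<le> lam * s"
      using that lam by simp
    ultimately have "0 < 1 + lam * s"
      by linarith
    moreover have "exp (- ?g s) = exp (- xi * s) / exp (xi / lam)"
      by (simp add: exp_diff[symmetric] algebra_simps)
    ultimately show ?thesis
      using g_pos[OF that] lam xi by (simp add: powr_minus field_simps)
  qed
  have "(LBINT s=ereal a..ereal b. exp (- xi * s) / (1 + lam * s))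
      = exp (xi / lam) / lam * (LBINT s=ereal a..ereal b. xi *\<^sub>R ?f (?g s))"
    unfolding interval_lebesgue_integral_mult_right[symmetric]
    using ab(2) by (intro interval_integral_cong integrand) (auto simp: einterval_iff)
  also have "(LBINT s=ereal a..ereal b. xi *\<^sub>R ?f (?g s)) = (LBINT u=ereal (?g a)..ereal (?g b). ?f u)"
  proof (rule interval_integral_substitution_finite[OF ab(2)])
    show "(?g has_real_derivative xi) (at s within {a..b})" for s
      by (auto intro!: derivative_eq_intros)
    show "continuous_on (?g ` {a..b}) ?f"
      using g_pos by (intro continuous_intros) (force simp: image_iff)+
  qed simp
  finally show ?thesis
    unfolding gen_inc_gamma_def .
qed

lemma integral_exp_p_reg_eq_gen_inc_gamma:
  fixes lam xi v1 v2 x a b t :: real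
  assumes lam: "0 < lam" and xi: "0 < xi" and v: "v2 < v1"
    and ab: "0 \<le> a" "a \<le> b" "b \<le> t"
    and support: "\<And>s. 0 < s \<Longrightarrow> s < t \<Longrightarrow> (v2 * s < x \<and> x < v1 * s) \<longleftrightarrow> (a < s \<and> s < b)"
  shows "xi * (LBINT s=ereal 0..ereal t. exp (- xi * s) * p_reg lam v1 v2 x s)
       = xi * exp (xi / lam) / (v1 - v2) * gen_inc_gamma 0 ((a + 1 / lam) * xi) ((b + 1 / lam) * xi)"
proof -
  have "(LBINT s=ereal 0..ereal t. exp (- xi * s) * p_reg lam v1 v2 x s)
      = (LBINT s=ereal a..ereal b. lam / (v1 - v2) * (exp (- xi * s) / (1 + lam * s)))"
    using ab support by (intro interval_integral_restrict) (auto simp: p_reg_def)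
  also have "\<dots> = lam / (v1 - v2) * (exp (xi / lam) / lam
      * gen_inc_gamma 0 ((a + 1 / lam) * xi) ((b + 1 / lam) * xi))"
  proof -
    have "- 1 / lam < a"
      using lam ab(1) divide_neg_pos[of "- 1" lam] by linarith
    then show ?thesis
      using lam xi ab(2)
      by (simp only: interval_lebesgue_integral_mult_right integral_exp_div_affine_eq_gen_inc_gamma)
  qed
  finally show ?thesis
    using lam by simp
qed

lemma Mx_nonneg:
  fixes v1 v2 x :: real
  assumes "v2 < 0" "0 < v1"
  shows "0 \<le> Mx v1 v2 x"
  using assms unfolding Mx_def
  by (cases "0 \<le> x") (auto simp: le_max_iff_disj divide_nonpos_neg)

lemma p_reg_support_opposite_signs:
  fixes v1 v2 x s :: real
  assumes "v2 < 0" "0 < v1" "0 < s"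
  shows "(v2 * s < x \<and> x < v1 * s) \<longleftrightarrow> Mx v1 v2 x < s"
  using assms unfolding Mx_def
  by (auto simp: pos_divide_less_eq neg_divide_less_eq mult.commute)

lemma p_reg_support_positive:
  fixes v1 v2 x s :: real
  assumes "0 < v2" "0 < v1"
  shows "(v2 * s < x \<and> x < v1 * s) \<longleftrightarrow> x / v1 < s \<and> s < x / v2"
  using assms by (auto simp: pos_divide_less_eq pos_less_divide_eq mult.commute)

lemma integral_exp_p_reg_tendsto_opposite_signs:
  fixes lam xi v1 v2 x :: real
  assumes lam: "0 < lam" and xi: "0 < xi" and v: "v2 < 0" "0 < v1"
  shows "((\<lambda>t. xi * (LBINT s=ereal 0..ereal t. exp (- xi * s) * p_reg lam v1 v2 x s))
      \<longlongrightarrow> xi * exp (xi / lam) / (v1 - v2) * upper_inc_gamma 0 ((Mx v1 v2 x + 1 / lam) * xi)) at_top"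
proof -
  let ?c = "xi * exp (xi / lam) / (v1 - v2)"
  let ?A = "(Mx v1 v2 x + 1 / lam) * xi"
  have M: "0 \<le> Mx v1 v2 x"
    using v by (rule Mx_nonneg)
  have "\<forall>\<^sub>F t in at_top. xi * (LBINT s=ereal 0..ereal t. exp (- xi * s) * p_reg lam v1 v2 x s)
      = ?c * gen_inc_gamma 0 ?A ((t + 1 / lam) * xi)"
    using eventually_ge_at_top[of "Mx v1 v2 x"]
  proof eventually_elim
    case (elim t)
    show ?case
      using lam xi v M elim
      by (intro integral_exp_p_reg_eq_gen_inc_gamma) (auto simp: p_reg_support_opposite_signs)
  qed
  moreover have "((\<lambda>t. gen_inc_gamma 0 ?A ((t + 1 / lam) * xi)) \<longlongrightarrow> upper_inc_gamma 0 ?A) at_top"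
  proof (rule filterlim_compose[OF gen_inc_gamma_tendsto_upper_inc_gamma])
    show "0 < ?A"
      using M lam xi by (simp add: add_nonneg_pos)
    show "filterlim (\<lambda>t. (t + 1 / lam) * xi) at_top at_top"
      using xi by real_asymp
  qed simp
  ultimately show ?thesis
    using tendsto_cong tendsto_mult_left by fastforce
qed

lemma integral_exp_p_reg_eventually_positive:
  fixes lam xi v1 v2 x :: real
  assumes lam: "0 < lam" and xi: "0 < xi" and v: "0 < v2" "v2 < v1"
  shows "\<forall>\<^sub>F t in at_top. xi * (LBINT s=ereal 0..ereal t. exp (- xi * s) * p_reg lam v1 v2 x s)
      = (if x > 0 then 1 else 0) * xi * exp (xi / lam) / (v1 - v2)
        * gen_inc_gamma 0 ((x / v1 + 1 / lam) * xi) ((x / v2 + 1 / lam) * xi)"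
proof (cases "x > 0")
  case True
  have "x / v1 \<le> x / v2"
    using v True by (simp add: frac_le)
  show ?thesis
    using eventually_ge_at_top[of "x / v2"]
  proof eventually_elim
    case (elim t)
    have "xi * (LBINT s=ereal 0..ereal t. exp (- xi * s) * p_reg lam v1 v2 x s)
        = xi * exp (xi / lam) / (v1 - v2) * gen_inc_gamma 0 ((x / v1 + 1 / lam) * xi) ((x / v2 + 1 / lam) * xi)"
      using lam xi v True elim \<open>x / v1 \<le> x / v2\<close>
      by (intro integral_exp_p_reg_eq_gen_inc_gamma) (auto simp: p_reg_support_positive)
    then show ?case
      using True by simp
  qed
next
  case False
  have empty: "\<not> (v2 * s < x \<and> x < v1 * s)" if "0 < s" for s
  proof -
    have "0 < v2 * s"
      using v that by simp
    with False show ?thesis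
      by linarith
  qed
  show ?thesis
    using eventually_ge_at_top[of 0]
  proof eventually_elim
    case (elim t)
    have "xi * (LBINT s=ereal 0..ereal t. exp (- xi * s) * p_reg lam v1 v2 x s)
        = xi * exp (xi / lam) / (v1 - v2) * gen_inc_gamma 0 ((0 + 1 / lam) * xi) ((0 + 1 / lam) * xi)"
      using lam xi v elim empty by (intro integral_exp_p_reg_eq_gen_inc_gamma) auto
    then show ?case
      using False unfolding gen_inc_gamma_def by simp
  qed
qed

lemma dirac_val_eventually_zero:
  fixes v x :: real
  assumes "v \<noteq> 0"
  shows "\<forall>\<^sub>F t in at_top. dirac_val (x - v * t) = 0"
  using eventually_gt_at_top[of "x / v"]
  by eventually_elim (use assms in \<open>auto simp: dirac_val_def\<close>)

lemma dirac_int_eventually_Hbar: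
  fixes lam xi v x :: real
  assumes v: "v \<noteq> 0"
  shows "\<forall>\<^sub>F t in at_top. xi * dirac_int (\<lambda>s. exp (- xi * s) / (1 + lam * s)) v x t = Hbar lam xi v x"
  using eventually_gt_at_top[of "x / v"]
proof eventually_elim
  case (elim t)
  have "1 + lam * (x / v) = (v + lam * x) / v"
    using v by (simp add: field_simps)
  then have "exp (- xi * (x / v)) / (1 + lam * (x / v)) / \<bar>v\<bar> = sgn v * (exp (- xi * x / v) / (v + lam * x))"
    using v by (cases "0 < v") simp_all
  then show ?case
    using elim unfolding dirac_int_def Hbar_def by auto
qed

lemma abs_p_reg_le:
  fixes lam v1 v2 x t :: real
  assumes "0 \<le> lam" "v2 < v1" "0 \<le> t"
  shows "\<bar>p_reg lam v1 v2 x t\<bar> \<le> lam / (v1 - v2)"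
proof -
  have "v1 - v2 \<le> (v1 - v2) * (1 + lam * t)"
    using assms by simp
  then have "lam / ((v1 - v2) * (1 + lam * t)) \<le> lam / (v1 - v2)"
    using assms by (intro frac_le) auto
  then show ?thesis
    using assms unfolding p_reg_def by auto
qed

lemma exp_p_reg_tendsto_zero:
  fixes lam xi v1 v2 x :: real
  assumes "0 \<le> lam" "v2 < v1" "0 < xi"
  shows "((\<lambda>t. exp (- xi * t) * p_reg lam v1 v2 x t) \<longlongrightarrow> 0) at_top"
proof (rule Lim_null_comparison)
  show "\<forall>\<^sub>F t in at_top. norm (exp (- xi * t) * p_reg lam v1 v2 x t) \<le> exp (- xi * t) * (lam / (v1 - v2))"
    using eventually_ge_at_top[of 0]
  proof eventually_elim
    case (elim t)
    show ?case
      using mult_left_mono[OF abs_p_reg_le[OF _ _ elim], of lam v2 v1 "exp (- xi * t)" x] assms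
      by (simp add: abs_mult)
  qed
  show "((\<lambda>t. exp (- xi * t) * (lam / (v1 - v2))) \<longlongrightarrow> 0) at_top"
    using assms by real_asymp
qed

lemma tp_eventually_eq:
  fixes lam xi v1 v2 q x :: real
  assumes "v1 \<noteq> 0" "v2 \<noteq> 0"
  shows "\<forall>\<^sub>F t in at_top. tp lam xi v1 v2 q x t
    = ereal (exp (- xi * t) * p_reg lam v1 v2 x t + (q * Hbar lam xi v1 x + (1 - q) * Hbar lam xi v2 x)
        + xi * (LBINT s=ereal 0..ereal t. exp (- xi * s) * p_reg lam v1 v2 x s))"
  using dirac_val_eventually_zero[OF assms(1), of x] dirac_val_eventually_zero[OF assms(2), of x]
    dirac_int_eventually_Hbar[OF assms(1), of xi lam x] dirac_int_eventually_Hbar[OF assms(2), of xi lam x]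
  by eventually_elim (simp add: tp_def tp_cond_def algebra_simps)

lemma tp_tendsto:
  fixes lam xi v1 v2 q x L :: real
  assumes "0 \<le> lam" "0 < xi" "v2 < v1" "v1 \<noteq> 0" "v2 \<noteq> 0"
    and "((\<lambda>t. xi * (LBINT s=ereal 0..ereal t. exp (- xi * s) * p_reg lam v1 v2 x s)) \<longlongrightarrow> L) at_top"
  shows "((\<lambda>t. tp lam xi v1 v2 q x t) \<longlongrightarrow>
          ereal (q * Hbar lam xi v1 x + (1 - q) * Hbar lam xi v2 x + L)) at_top"
proof -
  have "((\<lambda>t. exp (- xi * t) * p_reg lam v1 v2 x t + (q * Hbar lam xi v1 x + (1 - q) * Hbar lam xi v2 x)
        + xi * (LBINT s=ereal 0..ereal t. exp (- xi * s) * p_reg lam v1 v2 x s))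
      \<longlongrightarrow> 0 + (q * Hbar lam xi v1 x + (1 - q) * Hbar lam xi v2 x) + L) at_top"
    using assms by (intro tendsto_intros exp_p_reg_tendsto_zero) auto
  then show ?thesis
    using tendsto_cong[OF tp_eventually_eq[OF assms(4,5)]] by (simp add: tendsto_ereal)
qed

theorem corollary5:
  fixes lam xi v1 v2 q x :: real
  assumes "lam > 0" and "xi > 0" and "v2 < v1"
    and "v2 < 0 \<and> 0 < v1 \<or> 0 < v2 \<and> v2 < v1"
    and "0 \<le> q" and "q \<le> 1"
  shows "(v2 < 0 \<and> 0 < v1 \<longrightarrow>
           ((\<lambda>t. tp lam xi v1 v2 q x t) \<longlongrightarrow>
              ereal (q * Hbar lam xi v1 x + (1 - q) * Hbar lam xi v2 x
                + xi * exp (xi / lam) / (v1 - v2)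
                  * upper_inc_gamma 0 ((Mx v1 v2 x + 1 / lam) * xi))) at_top)
       \<and> (0 < v2 \<and> v2 < v1 \<longrightarrow>
           ((\<lambda>t. tp lam xi v1 v2 q x t) \<longlongrightarrow>
              ereal (q * Hbar lam xi v1 x + (1 - q) * Hbar lam xi v2 x
                + (if x > 0 then 1 else 0) * xi * exp (xi / lam) / (v1 - v2)
                  * gen_inc_gamma 0 ((x / v1 + 1 / lam) * xi) ((x / v2 + 1 / lam) * xi))) at_top)"
proof (intro conjI impI)
  assume "v2 < 0 \<and> 0 < v1"
  with assms show "((\<lambda>t. tp lam xi v1 v2 q x t) \<longlongrightarrow> ereal (q * Hbar lam xi v1 x + (1 - q) * Hbar lam xi v2 x
      + xi * exp (xi / lam) / (v1 - v2) * upper_inc_gamma 0 ((Mx v1 v2 x + 1 / lam) * xi))) at_top"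
    by (intro tp_tendsto integral_exp_p_reg_tendsto_opposite_signs) auto
next
  assume "0 < v2 \<and> v2 < v1"
  with assms show "((\<lambda>t. tp lam xi v1 v2 q x t) \<longlongrightarrow> ereal (q * Hbar lam xi v1 x + (1 - q) * Hbar lam xi v2 x
      + (if x > 0 then 1 else 0) * xi * exp (xi / lam) / (v1 - v2)
        * gen_inc_gamma 0 ((x / v1 + 1 / lam) * xi) ((x / v2 + 1 / lam) * xi))) at_top"
    by (intro tp_tendsto tendsto_eventually integral_exp_p_reg_eventually_positive) auto
qed

end
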